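(* Let $G=([n],E)$ be any graph and $F$ any atomless distribution on $[0,\infty)$. For every price vector $\mathbf{p}=(p_1,\dots,p_n)$ with $p_i>0$ and every equilibrium $\mathbf{T}\in\mathcal{N}_{\mathbf{p}}$, $$\mathcal{R}(\mathbf{p},\mathbf{T})\le \mathbb{E}\Big[\max_{I\subseteq[n]\text{ independent in }G}\ \sum_{i\in I} v_i\Big],$$ where $v_1,\dots,v_n$ are i.i.d. with distribution $F$.
   Context: Public-goods pricing game: there are $n$ buyers, the vertices of an undirected graph $G=([n],E)$; $N(i)=\{j:(i,j)\in E\}$ (so $i\notin N(i)$). Buyer $i$ has private value $v_i$; the $v_i$ are i.i.d. with atomless cumulative distribution function $F$ on $[0,\infty)$, extended by $F(\infty)=1$. If $S$ is the set of buyers who purchase and $\pi_i$ is $i$'s payment, $i$'s utility is $v_i-\pi_i$ if $i\in S$ or $S\cap N(i)\neq\emptyset$, and $-\pi_i$ otherwise; a buyer pays $p_i$ iff he purchases. An equilibrium for the price vector $\mathbf{p}$ is a threshold vector $\mathbf{T}=(T_1,\dots,T_n)\in[0,\infty]^n$ (buyer $i$ purchases iff $v_i\ge T_i$) satisfying $T_i=p_i/\prod_{j\in N(i)}F(T_j)$ for all $i$ (convention $c/0=\infty$ for $c>0$). $\mathcal{N}_{\mathbf{p}}$ denotes the set of equilibria. The expected revenue is $\mathcal{R}(\mathbf{p},\mathbf{T})=\sum_i p_i(1-F(T_i))$. *)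

theory Defs
  imports "HOL-Probability.Probability"
begin

definition undirected_graph :: "nat \<Rightarrow> (nat \<Rightarrow> nat \<Rightarrow> bool) \<Rightarrow> bool" where
  "undirected_graph n E \<longleftrightarrow> (\<forall>i<n. \<forall>j<n. E i j \<longleftrightarrow> E j i) \<and> (\<forall>i<n. \<not> E i i)"

definition nbrs :: "nat \<Rightarrow> (nat \<Rightarrow> nat \<Rightarrow> bool) \<Rightarrow> nat \<Rightarrow> nat set" where
  "nbrs n E i = {j. j < n \<and> E i j}"

definition independent_set :: "nat \<Rightarrow> (nat \<Rightarrow> nat \<Rightarrow> bool) \<Rightarrow> nat set \<Rightarrow> bool" where
  "independent_set n E I \<longleftrightarrow> I \<subseteq> {..<n} \<and> (\<forall>i\<in>I. \<forall>j\<in>I. \<not> E i j)"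

definition Fext :: "real measure \<Rightarrow> ennreal \<Rightarrow> real" where
  "Fext M t = (if t = \<infinity> then 1 else cdf M (enn2real t))"

text \<open>Equilibrium thresholds: T_i = p_i / prod_{j in N(i)} F(T_j), with c/0 = infinity
  (this is exactly ennreal division).\<close>
definition equilibrium :: "nat \<Rightarrow> (nat \<Rightarrow> nat \<Rightarrow> bool) \<Rightarrow> real measure \<Rightarrow> (nat \<Rightarrow> real)
    \<Rightarrow> (nat \<Rightarrow> ennreal) \<Rightarrow> bool" where
  "equilibrium n E M p T \<longleftrightarrow>
     (\<forall>i<n. T i = ennreal (p i) / (\<Prod>j\<in>nbrs n E i. ennreal (Fext M (T j))))"

definition revenue :: "nat \<Rightarrow> real measure \<Rightarrow> (nat \<Rightarrow> real) \<Rightarrow> (nat \<Rightarrow> ennreal) \<Rightarrow> real" where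
  "revenue n M p T = (\<Sum>i<n. p i * (1 - Fext M (T i)))"

definition max_indep_value :: "nat \<Rightarrow> (nat \<Rightarrow> nat \<Rightarrow> bool) \<Rightarrow> (nat \<Rightarrow> real) \<Rightarrow> real" where
  "max_indep_value n E v = Max {(\<Sum>i\<in>I. v i) | I. independent_set n E I}"

end

theory Submission
  imports Defs
begin

(*
  Call buyer i a winner for the value profile v if v_i exceeds his
  threshold T_i while every neighbour j has v_j \<le> T_j.  Two adjacent buyers can
  never both be winners, so the winners form an independent set and the total
  value of the winners is at most the maximum-weight independent set value.
  On the other hand, by independence of the v_j, the expected value obtained
  from buyer i as a winner is  E[v_i; v_i > T_i] * prod_{j in N(i)} F(T_j), and
  E[v_i; v_i > T_i] \<ge> T_i (1 - F(T_i)).  The equilibrium condition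
  p_i = T_i * prod_{j in N(i)} F(T_j)  turns this lower bound into exactly the
  revenue p_i (1 - F(T_i)) collected from buyer i.
*)

definition gain :: "ennreal \<Rightarrow> real \<Rightarrow> ennreal" where
  "gain t x = (if t < ennreal x then ennreal x else 0)"

definition below :: "ennreal \<Rightarrow> real \<Rightarrow> ennreal" where
  "below t x = (if ennreal x \<le> t then 1 else 0)"

lemma gain_measurable [measurable]: "gain t \<in> borel_measurable borel"
  unfolding gain_def by measurable

lemma below_measurable [measurable]: "below t \<in> borel_measurable borel"
  unfolding below_def by measurable

lemma Fext_bounds:
  assumes "real_distribution M"
  shows "0 \<le> Fext M t" "Fext M t \<le> 1"
  using real_distribution.cdf_bounded_prob[OF assms] by (auto simp: Fext_def cdf_def)

lemma nn_integral_below: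
  assumes "real_distribution M"
  shows "integral\<^sup>N M (below t) = ennreal (Fext M t)"
proof -
  interpret real_distribution M by (rule assms)
  show ?thesis
  proof (cases "t = \<infinity>")
    case True
    then have "below t = (\<lambda>_. 1)" by (simp add: below_def fun_eq_iff)
    then show ?thesis using True emeasure_space_1 by (simp add: Fext_def)
  next
    case False
    then obtain r where r: "t = ennreal r" "r \<ge> 0" by (cases t) auto
    have "below t = indicator {..r}"
      using r by (auto simp: below_def fun_eq_iff indicator_def ennreal_le_iff2)
    then show ?thesis
      using r by (simp add: Fext_def cdf_def emeasure_eq_measure)
  qed
qed

lemma threshold_revenue_le_gain:
  assumes "real_distribution M"
  shows "t * ennreal (1 - Fext M t) \<le> integral\<^sup>N M (gain t)"
proof (cases "t = \<infinity>")
  case True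
  then show ?thesis by (simp add: Fext_def)
next
  case False
  interpret real_distribution M by (rule assms)
  obtain r where r: "t = ennreal r" "r \<ge> 0" using False by (cases t) auto
  have "1 - measure M {..r} = measure M {r<..}"
    using finite_measure_compl[of "{..r}"] prob_space
    by (simp add: Compl_eq_Diff_UNIV[symmetric] Compl_atMost)
  then have tail: "ennreal (1 - Fext M t) = emeasure M {r<..}"
    using r by (simp add: Fext_def cdf_def emeasure_eq_measure)
  have "t * emeasure M {r<..} = (\<integral>\<^sup>+ x. t * indicator {r<..} x \<partial>M)"
    by (simp add: nn_integral_cmult_indicator)
  also have "\<dots> \<le> integral\<^sup>N M (gain t)"
    by (intro nn_integral_mono)
       (auto simp: gain_def indicator_def r ennreal_less_iff intro: ennreal_leI)
  finally show ?thesis using tail by simp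
qed

lemma prod_select:
  fixes a :: "'b::comm_monoid_mult"
  assumes "finite A" "i \<in> A" "N \<subseteq> A" "i \<notin> N"
  shows "(\<Prod>k\<in>A. if k = i then a else if k \<in> N then b k else 1) = a * prod b N"
proof -
  have "(\<Prod>k\<in>A. if k = i then a else if k \<in> N then b k else 1)
      = (\<Prod>k\<in>insert i N. if k = i then a else if k \<in> N then b k else 1)"
    by (rule prod.mono_neutral_right) (use assms in auto)
  also have "\<dots> = a * (\<Prod>k\<in>N. if k = i then a else if k \<in> N then b k else 1)"
    using assms by (subst prod.insert) (auto intro: finite_subset)
  also have "(\<Prod>k\<in>N. if k = i then a else if k \<in> N then b k else 1) = prod b N"
    using assms by (intro prod.cong) auto
  finally show ?thesis .
qed

lemma nn_integral_PiM_factor: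
  fixes f :: "'a \<Rightarrow> ennreal" and h :: "'i \<Rightarrow> 'a \<Rightarrow> ennreal"
  assumes M: "prob_space M" and A: "finite A" "i \<in> A" "N \<subseteq> A" "i \<notin> N"
    and f: "f \<in> borel_measurable M" and h: "\<And>j. h j \<in> borel_measurable M"
  shows "(\<integral>\<^sup>+ v. f (v i) * (\<Prod>j\<in>N. h j (v j)) \<partial>PiM A (\<lambda>_. M))
           = integral\<^sup>N M f * (\<Prod>j\<in>N. integral\<^sup>N M (h j))"
proof -
  interpret product_sigma_finite "\<lambda>_. M"
    by (simp add: product_sigma_finite_def prob_space_imp_sigma_finite M)
  define g where "g k = (if k = i then f else if k \<in> N then h k else (\<lambda>_. 1))" for k
  have g_meas: "g k \<in> borel_measurable M" for k
    using f h by (simp add: g_def)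
  have "f (v i) * (\<Prod>j\<in>N. h j (v j)) = (\<Prod>k\<in>A. g k (v k))" for v
  proof -
    have "(\<Prod>k\<in>A. g k (v k)) = (\<Prod>k\<in>A. if k = i then f (v i) else if k \<in> N then h k (v k) else 1)"
      unfolding g_def by (intro prod.cong) auto
    then show ?thesis using prod_select[OF A, of "f (v i)" "\<lambda>j. h j (v j)"] by simp
  qed
  then have "(\<integral>\<^sup>+ v. f (v i) * (\<Prod>j\<in>N. h j (v j)) \<partial>PiM A (\<lambda>_. M))
      = (\<integral>\<^sup>+ v. (\<Prod>k\<in>A. g k (v k)) \<partial>PiM A (\<lambda>_. M))"
    by simp
  also have "\<dots> = (\<Prod>k\<in>A. integral\<^sup>N M (g k))"
    by (rule product_nn_integral_prod[OF A(1) g_meas])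
  also have "\<dots> = (\<Prod>k\<in>A. if k = i then integral\<^sup>N M f else if k \<in> N then integral\<^sup>N M (h k) else 1)"
    unfolding g_def using prob_space.emeasure_space_1[OF M] by (intro prod.cong) auto
  also have "\<dots> = integral\<^sup>N M f * (\<Prod>j\<in>N. integral\<^sup>N M (h j))"
    by (rule prod_select[OF A])
  finally show ?thesis .
qed

lemma equilibrium_revenue_term:
  assumes distr: "real_distribution M" and eq: "equilibrium n E M p T"
    and i: "i < n" and price: "p i > 0"
  shows "ennreal (p i * (1 - Fext M (T i)))
           = T i * ennreal (1 - Fext M (T i)) * (\<Prod>j\<in>nbrs n E i. ennreal (Fext M (T j)))"
proof (cases "T i = \<infinity>")
  case True
  then show ?thesis by (simp add: Fext_def)
next
  case False
  define P where "P = (\<Prod>j\<in>nbrs n E i. ennreal (Fext M (T j)))"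
  have T_eq: "T i = ennreal (p i) / P"
    using eq i by (simp add: equilibrium_def P_def)
  have "P \<noteq> 0"
    using False T_eq price by (auto simp: ennreal_divide_eq_top_iff)
  moreover have "P \<noteq> \<infinity>" by (simp add: P_def ennreal_prod_eq_top)
  ultimately have p_eq: "ennreal (p i) = T i * P"
    using T_eq by (simp add: ennreal_divide_times top.not_eq_extremum)
  have "ennreal (p i * (1 - Fext M (T i))) = ennreal (p i) * ennreal (1 - Fext M (T i))"
    using price Fext_bounds[OF distr] by (intro ennreal_mult) auto
  then show ?thesis using p_eq by (simp add: P_def mult_ac)
qed

definition winner_value ::
    "nat \<Rightarrow> (nat \<Rightarrow> nat \<Rightarrow> bool) \<Rightarrow> (nat \<Rightarrow> ennreal) \<Rightarrow> (nat \<Rightarrow> real) \<Rightarrow> nat \<Rightarrow> ennreal" where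
  "winner_value n E T v i = gain (T i) (v i) * (\<Prod>j\<in>nbrs n E i. below (T j) (v j))"

lemma finite_nbrs: "finite (nbrs n E i)"
  by (rule finite_subset[of _ "{..<n}"]) (auto simp: nbrs_def)

lemma sum_le_max_indep_value:
  assumes "independent_set n E I"
  shows "sum v I \<le> max_indep_value n E v"
proof -
  have "{(\<Sum>i\<in>I. v i) | I. independent_set n E I} \<subseteq> sum v ` Pow {..<n}"
    by (auto simp: independent_set_def)
  then have "finite {(\<Sum>i\<in>I. v i) | I. independent_set n E I}"
    by (rule finite_subset) simp
  then show ?thesis
    unfolding max_indep_value_def using assms by (intro Max_ge) auto
qed

lemma prod_below:
  "finite N \<Longrightarrow> (\<Prod>j\<in>N. below (T j) (v j)) = (if \<forall>j\<in>N. ennreal (v j) \<le> T j then 1 else 0)"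
  by (induction N rule: finite_induct) (auto simp: below_def)

lemma sum_winner_value_le:
  "(\<Sum>i<n. winner_value n E T v i) \<le> ennreal (max_indep_value n E v)"
proof -
  define W where "W = {i. i < n \<and> T i < ennreal (v i) \<and> (\<forall>j\<in>nbrs n E i. ennreal (v j) \<le> T j)}"
  have W_sub: "W \<subseteq> {..<n}" by (auto simp: W_def)
  have winner: "winner_value n E T v i = (if i \<in> W then ennreal (v i) else 0)" if "i < n" for i
    using that prod_below[OF finite_nbrs] by (auto simp: winner_value_def gain_def W_def)
  have W_indep: "independent_set n E W"
    unfolding independent_set_def
  proof (intro conjI ballI notI W_sub)
    fix i j assume "i \<in> W" "j \<in> W" "E i j"
    then have "ennreal (v j) \<le> T j" "T j < ennreal (v j)"
      by (auto simp: W_def nbrs_def)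
    then show False by simp
  qed
  have v_nonneg: "0 \<le> v i" if "i \<in> W" for i
  proof (rule ccontr)
    assume "\<not> 0 \<le> v i"
    then have "ennreal (v i) = 0" by (simp add: ennreal_eq_0_iff)
    then show False using that by (simp add: W_def)
  qed
  have "(\<Sum>i<n. winner_value n E T v i) = (\<Sum>i<n. if i \<in> W then ennreal (v i) else 0)"
    by (intro sum.cong) (auto simp: winner)
  also have "\<dots> = (\<Sum>i\<in>W. ennreal (v i))"
    using W_sub by (simp add: sum.If_cases Int_absorb1)
  also have "\<dots> = ennreal (sum v W)"
    using v_nonneg by simp
  also have "\<dots> \<le> ennreal (max_indep_value n E v)"
    by (intro ennreal_leI sum_le_max_indep_value W_indep)
  finally show ?thesis .
qed

lemma revenue_term_le_winner_value:
  assumes graph: "undirected_graph n E" and distr: "real_distribution M"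
    and eq: "equilibrium n E M p T" and i: "i < n" and price: "p i > 0"
  shows "ennreal (p i * (1 - Fext M (T i)))
           \<le> (\<integral>\<^sup>+ v. winner_value n E T v i \<partial>PiM {..<n} (\<lambda>_. M))"
proof -
  interpret real_distribution M by (rule distr)
  have measurable_M: "f \<in> borel_measurable M" if "f \<in> borel_measurable borel" for f :: "real \<Rightarrow> ennreal"
    using that measurable_cong_sets[OF events_eq_borel refl] by simp
  have "i \<notin> nbrs n E i" "nbrs n E i \<subseteq> {..<n}"
    using graph i by (auto simp: nbrs_def undirected_graph_def)
  then have factor: "(\<integral>\<^sup>+ v. winner_value n E T v i \<partial>PiM {..<n} (\<lambda>_. M))
      = integral\<^sup>N M (gain (T i)) * (\<Prod>j\<in>nbrs n E i. integral\<^sup>N M (below (T j)))"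
    unfolding winner_value_def using i
    by (intro nn_integral_PiM_factor prob_space_axioms measurable_M) auto
  have "ennreal (p i * (1 - Fext M (T i)))
      = T i * ennreal (1 - Fext M (T i)) * (\<Prod>j\<in>nbrs n E i. ennreal (Fext M (T j)))"
    by (rule equilibrium_revenue_term[OF distr eq i price])
  also have "\<dots> \<le> integral\<^sup>N M (gain (T i)) * (\<Prod>j\<in>nbrs n E i. integral\<^sup>N M (below (T j)))"
    by (simp add: nn_integral_below[OF distr] mult_right_mono threshold_revenue_le_gain[OF distr])
  finally show ?thesis using factor by simp
qed

lemma winner_value_measurable:
  assumes "real_distribution M" and "i < n"
  shows "(\<lambda>v. winner_value n E T v i) \<in> borel_measurable (PiM {..<n} (\<lambda>_. M))"
proof -
  have coordinate: "(\<lambda>v. f (v j)) \<in> borel_measurable (PiM {..<n} (\<lambda>_. M))"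
    if "j < n" and "f \<in> borel_measurable borel" for j and f :: "real \<Rightarrow> ennreal"
  proof (rule measurable_compose[OF measurable_component_singleton])
    show "f \<in> borel_measurable M"
      using that(2) real_distribution.events_eq_borel[OF assms(1)] by (simp cong: measurable_cong_sets)
  qed (use that in simp)
  show ?thesis
    unfolding winner_value_def using assms(2)
    by (intro borel_measurable_times_ennreal borel_measurable_prod_ennreal coordinate)
       (auto simp: nbrs_def)
qed

theorem mainTheorem1:
  fixes n :: nat and E :: "nat \<Rightarrow> nat \<Rightarrow> bool" and M :: "real measure"
    and p :: "nat \<Rightarrow> real" and T :: "nat \<Rightarrow> ennreal"
  assumes graph: "undirected_graph n E"
    and distr: "real_distribution M"
    and nonneg: "measure M {..<0} = 0"
    and atomless: "\<And>x. measure M {x} = 0"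
    and prices: "\<And>i. i < n \<Longrightarrow> p i > 0"
    and eq: "equilibrium n E M p T"
  shows "ennreal (revenue n M p T)
           \<le> (\<integral>\<^sup>+ v. ennreal (max_indep_value n E v) \<partial>(PiM {..<n} (\<lambda>_. M)))"
proof -
  have "0 \<le> p i * (1 - Fext M (T i))" if "i < n" for i
    using prices[OF that] Fext_bounds(2)[OF distr] by simp
  then have "ennreal (revenue n M p T) = (\<Sum>i<n. ennreal (p i * (1 - Fext M (T i))))"
    unfolding revenue_def by (subst sum_ennreal) auto
  also have "\<dots> \<le> (\<Sum>i<n. \<integral>\<^sup>+ v. winner_value n E T v i \<partial>PiM {..<n} (\<lambda>_. M))"
    by (intro sum_mono revenue_term_le_winner_value[OF graph distr eq] prices) simp_all
  also have "\<dots> = (\<integral>\<^sup>+ v. (\<Sum>i<n. winner_value n E T v i) \<partial>PiM {..<n} (\<lambda>_. M))"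
    by (intro nn_integral_sum[symmetric] winner_value_measurable[OF distr]) simp
  also have "\<dots> \<le> (\<integral>\<^sup>+ v. ennreal (max_indep_value n E v) \<partial>PiM {..<n} (\<lambda>_. M))"
    by (intro nn_integral_mono sum_winner_value_le)
  finally show ?thesis .
qed

end
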